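(* The algorithm HashNWalk (with a single summary) takes $O(|e|+\min(M,|e|)^2)$ time to process a hyperedge $e$.
   Context: Input: a stream of hyperedges $(e_i,t_i)$, each $e_i$ a nonempty subset of a node set $V$ with timestamp $t_i$; parameters: number of supernodes $M$, time-decay $\alpha\in(0,1)$. A hash function $h:V\to\{1,\dots,M\}$ evaluable in $O(1)$ time is fixed. The algorithm maintains $S\in\mathbb{R}^{M\times M}$ and $T\in\mathbb{R}^M$, initialized to zero. Processing hyperedge $e$ arriving at time $t$ consists of: (i) computing the sparse vector $m(e)\in\mathbb{Z}^M$, $m_k(e)=\sum_{v\in e}\mathds{1}(h(v)=k)$, and $\tilde e=\{k:m_k(e)>0\}$; (ii) updating, for all $u,v$, $S_{uv}\leftarrow S_{uv}+\alpha^{-t}\mathds{1}(u\in\tilde e)m_v(e)/|e|$ and $T_u\leftarrow T_u+\alpha^{-t}\mathds{1}(u\in\tilde e)$ (only entries with $u,v\in\tilde e$ change); (iii) computing the two anomaly scores $\mathsf{score_U}(e)$ and $\mathsf{score_B}(e)$, where $\mathsf{score}(e)=\mathsf{aggregate}_{u,v\in\tilde e}\big(d_{u,t}^{\beta}\log(a_{uv}/s_{uv})\big)$ with $a_{uv}=m_v(e)/|e|$, $s_{uv}=\tilde P_{uv}=S_{uv}/T_u$ (the summary just before $t$), $d_{u,t}$ the maintained number of occurrences of supernode $u$ at time $t$; $\mathsf{score_U}$ uses $\beta=0$ and $\mathsf{aggregate}=\max$, and $\mathsf{score_B}$ uses $\beta=1$ and $\mathsf{aggregate}=$ mean over all ordered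 pairs. The computational model is the RAM model with $O(1)$-time arithmetic (including $\log$ and powers) and $O(1)$-time sparse vector/hash table operations. *)

theory Defs
  imports Complex_Main
begin

text \<open>
  Cost-instrumented model of one step of HashNWalk (single summary) in the RAM model.
  Every function returns a pair (result, cost), where cost counts unit-cost operations
  (arithmetic incl. ln and powers, hash evaluation, hash-table/sparse-vector lookups
  and updates each cost one unit).  Supernodes are natural numbers 1..M; sparse
  vectors / hash tables are modelled as total functions (nat => _) with O(1) access.
  The hyperedge e is given as a duplicate-free list of its nodes.
  The summary state is (S, T, d): S :: M x M matrix, T :: vector, d :: occurrence counts.
\<close>

type_synonym summary = "(nat \<Rightarrow> nat \<Rightarrow> real) \<times> (nat \<Rightarrow> real) \<times> (nat \<Rightarrow> real)"

text \<open>Step (i): one pass over e computing m(e) (sparse), the list of supernodes of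
  e~ (each listed once) and |e|.  Per node: hash evaluation, lookup, update, counter.\<close>
fun hnw_count :: "('v \<Rightarrow> nat) \<Rightarrow> 'v list \<Rightarrow> (nat \<Rightarrow> nat) \<times> nat list \<times> nat
    \<Rightarrow> ((nat \<Rightarrow> nat) \<times> nat list \<times> nat) \<times> nat" where
  "hnw_count h [] acc = (acc, 0)"
| "hnw_count h (v # vs) (m, E, n) =
     (let k = h v;
          E' = (if m k = 0 then k # E else E);
          (r, c) = hnw_count h vs (m(k := m k + 1), E', n + 1)
      in (r, c + 4))"

fun hnw_upd_d :: "nat list \<Rightarrow> (nat \<Rightarrow> real) \<Rightarrow> (nat \<Rightarrow> real) \<times> nat" where
  "hnw_upd_d [] d = (d, 0)"
| "hnw_upd_d (u # us) d = (let (r, c) = hnw_upd_d us (d(u := d u + 1)) in (r, c + 1))"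

definition opt_max :: "real option \<Rightarrow> real \<Rightarrow> real option" where
  "opt_max acc x = (case acc of None \<Rightarrow> Some x | Some y \<Rightarrow> Some (max x y))"

text \<open>Step (iii), inner loop over v in e~ for fixed u: term log(a_uv / s_uv), with
  a_uv = m_v(e)/|e| and s_uv = S_uv / T_u (summary before time t).  Accumulates the
  maximum (beta = 0) and the sum of d_u * log(a_uv/s_uv) (beta = 1).\<close>
fun hnw_score_inner :: "(nat \<Rightarrow> nat \<Rightarrow> real) \<Rightarrow> (nat \<Rightarrow> real) \<Rightarrow> (nat \<Rightarrow> real) \<Rightarrow> real
    \<Rightarrow> (nat \<Rightarrow> nat) \<Rightarrow> nat \<Rightarrow> nat list \<Rightarrow> real option \<times> real \<Rightarrow> (real option \<times> real) \<times> nat" where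
  "hnw_score_inner S T d n m u [] acc = (acc, 0)"
| "hnw_score_inner S T d n m u (v # vs) (mx, sm) =
     (let a = real (m v) / n;
          s = S u v / T u;
          x = ln (a / s);
          (r, c) = hnw_score_inner S T d n m u vs (opt_max mx x, sm + d u * x)
      in (r, c + 1))"

fun hnw_score_outer :: "(nat \<Rightarrow> nat \<Rightarrow> real) \<Rightarrow> (nat \<Rightarrow> real) \<Rightarrow> (nat \<Rightarrow> real) \<Rightarrow> real
    \<Rightarrow> (nat \<Rightarrow> nat) \<Rightarrow> nat list \<Rightarrow> nat list \<Rightarrow> real option \<times> real \<Rightarrow> (real option \<times> real) \<times> nat" where
  "hnw_score_outer S T d n m E [] acc = (acc, 0)"
| "hnw_score_outer S T d n m E (u # us) acc =
     (let (acc1, c1) = hnw_score_inner S T d n m u E acc;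
          (r, c2) = hnw_score_outer S T d n m E us acc1
      in (r, c1 + c2 + 1))"

fun hnw_upd_inner :: "real \<Rightarrow> real \<Rightarrow> (nat \<Rightarrow> nat) \<Rightarrow> nat \<Rightarrow> nat list
    \<Rightarrow> (nat \<Rightarrow> nat \<Rightarrow> real) \<Rightarrow> (nat \<Rightarrow> nat \<Rightarrow> real) \<times> nat" where
  "hnw_upd_inner w n m u [] S = (S, 0)"
| "hnw_upd_inner w n m u (v # vs) S =
     (let (r, c) = hnw_upd_inner w n m u vs (S(u := (S u)(v := S u v + w * real (m v) / n)))
      in (r, c + 1))"

fun hnw_upd_outer :: "real \<Rightarrow> real \<Rightarrow> (nat \<Rightarrow> nat) \<Rightarrow> nat list \<Rightarrow> nat list
    \<Rightarrow> (nat \<Rightarrow> nat \<Rightarrow> real) \<Rightarrow> (nat \<Rightarrow> real) \<Rightarrow> ((nat \<Rightarrow> nat \<Rightarrow> real) \<times> (nat \<Rightarrow> real)) \<times> nat" where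
  "hnw_upd_outer w n m E [] S T = ((S, T), 0)"
| "hnw_upd_outer w n m E (u # us) S T =
     (let (S1, c1) = hnw_upd_inner w n m u E S;
          (r, c2) = hnw_upd_outer w n m E us S1 (T(u := T u + w))
      in (r, c1 + c2 + 1))"

definition hashnwalk_step :: "('v \<Rightarrow> nat) \<Rightarrow> real \<Rightarrow> real \<Rightarrow> 'v list \<Rightarrow> summary
    \<Rightarrow> (summary \<times> real \<times> real) \<times> nat" where
  "hashnwalk_step h alpha t e st =
     (let (S, T, d) = st;
          ((m, E, n), c1) = hnw_count h e ((\<lambda>_. 0), [], 0);
          (d', c2) = hnw_upd_d E d;
          ((mx, sm), c3) = hnw_score_outer S T d' (real n) m E E (None, 0);
          scoreU = (case mx of None \<Rightarrow> 0 | Some x \<Rightarrow> x);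
          k = length E;
          scoreB = sm / (real k * real k);
          w = alpha powr (- t);
          ((S', T'), c4) = hnw_upd_outer w (real n) m E E S T
      in (((S', T', d'), scoreU, scoreB), c1 + c2 + c3 + c4 + 6))"

definition hashnwalk_cost :: "('v \<Rightarrow> nat) \<Rightarrow> real \<Rightarrow> real \<Rightarrow> 'v list \<Rightarrow> summary \<Rightarrow> nat" where
  "hashnwalk_cost h alpha t e st = snd (hashnwalk_step h alpha t e st)"

end

theory Submission
  imports Defs
begin

text \<open>
  The counting pass costs four units per node of \<open>e\<close>; the remaining passes run over
  the list \<open>\<tilde>e\<close> of supernodes of \<open>e\<close> (once for the occurrence counts, over all pairs
  for the scores and for the update of \<open>S\<close>), so the total cost is exactly
  \<open>4|e| + 2k\<^sup>2 + 3k + 6\<close> with \<open>k = |\<tilde>e|\<close>.  Since \<open>\<tilde>e\<close> lists the hash values of nodes of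
  \<open>e\<close> without repetition, \<open>k \<le> min M |e|\<close>.
\<close>

definition hnw_supernodes :: "('v \<Rightarrow> nat) \<Rightarrow> 'v list \<Rightarrow> nat list" where
  "hnw_supernodes h e = fst (snd (fst (hnw_count h e ((\<lambda>_. 0), [], 0))))"

lemma hnw_count_cost: "snd (hnw_count h vs acc) = 4 * length vs"
  by (induction h vs acc rule: hnw_count.induct) (auto simp: Let_def split_beta)

lemma hnw_upd_d_cost: "snd (hnw_upd_d us d) = length us"
  by (induction us arbitrary: d) (auto simp: split_beta)

lemma hnw_score_inner_cost: "snd (hnw_score_inner S T d n m u vs acc) = length vs"
  by (induction vs arbitrary: acc) (auto simp: Let_def split_beta)

lemma hnw_score_outer_cost:
  "snd (hnw_score_outer S T d n m E us acc) = length us * (length E + 1)"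
  by (induction us arbitrary: acc) (auto simp: Let_def split_beta hnw_score_inner_cost)

lemma hnw_upd_inner_cost: "snd (hnw_upd_inner w n m u vs S) = length vs"
  by (induction vs arbitrary: S) (auto simp: Let_def split_beta)

lemma hnw_upd_outer_cost:
  "snd (hnw_upd_outer w n m E us S T) = length us * (length E + 1)"
  by (induction us arbitrary: S T) (auto simp: Let_def split_beta hnw_upd_inner_cost)

lemma hashnwalk_cost_eq:
  "hashnwalk_cost h alpha t e st =
     (let k = length (hnw_supernodes h e) in 4 * length e + k + 2 * (k * (k + 1)) + 6)"
  unfolding hashnwalk_cost_def hashnwalk_step_def hnw_supernodes_def
  by (simp add: Let_def split_beta hnw_count_cost hnw_upd_d_cost hnw_score_outer_cost
      hnw_upd_outer_cost)

text \<open>A supernode is listed exactly when its counter becomes positive, hence at most once.\<close>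
lemma hnw_count_supernodes_distinct_subset:
  assumes "distinct E" and "\<forall>k\<in>set E. 0 < m k"
  shows "distinct (fst (snd (fst (hnw_count h vs (m, E, n)))))
    \<and> set (fst (snd (fst (hnw_count h vs (m, E, n))))) \<subseteq> set E \<union> h ` set vs"
  using assms
proof (induction vs arbitrary: m E n)
  case Nil
  then show ?case by simp
next
  case (Cons v vs)
  define m' where "m' = m(h v := m (h v) + 1)"
  define E' where "E' = (if m (h v) = 0 then h v # E else E)"
  have "distinct E'" and "\<forall>k\<in>set E'. 0 < m' k"
    using Cons.prems by (auto simp: E'_def m'_def)
  from Cons.IH[OF this, of "n + 1"]
  have "distinct (fst (snd (fst (hnw_count h vs (m', E', n + 1)))))
    \<and> set (fst (snd (fst (hnw_count h vs (m', E', n + 1))))) \<subseteq> set E' \<union> h ` set vs" .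
  moreover have "set E' \<subseteq> set E \<union> {h v}"
    by (auto simp: E'_def)
  ultimately show ?case
    by (auto simp: Let_def split_beta m'_def E'_def)
qed

lemma length_hnw_supernodes_le_card: "length (hnw_supernodes h e) \<le> card (h ` set e)"
proof -
  have "distinct (hnw_supernodes h e)" and "set (hnw_supernodes h e) \<subseteq> h ` set e"
    using hnw_count_supernodes_distinct_subset[of "[]" "\<lambda>_. 0" h e 0]
    by (simp_all add: hnw_supernodes_def)
  then show ?thesis
    by (metis card_mono distinct_card finite_imageI finite_set)
qed

lemma length_hnw_supernodes_le_min:
  assumes "\<forall>v. h v \<in> {1..M}"
  shows "length (hnw_supernodes h e) \<le> min M (length e)"
proof -
  have "h ` set e \<subseteq> {1..M}"
    using assms by auto
  then have "card (h ` set e) \<le> M"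
    using card_mono[of "{1..M}"] by fastforce
  moreover have "card (h ` set e) \<le> length e"
    using card_image_le card_length le_trans by blast
  ultimately show ?thesis
    using length_hnw_supernodes_le_card[of h e] by simp
qed

theorem theorem1:
  "\<exists>C::real. C > 0 \<and>
     (\<forall>(M::nat) (h::'v \<Rightarrow> nat) (alpha::real) (t::real) (e::'v list) (st::summary).
        M \<ge> 1 \<longrightarrow> (\<forall>v. h v \<in> {1..M}) \<longrightarrow> 0 < alpha \<longrightarrow> alpha < 1 \<longrightarrow>
        e \<noteq> [] \<longrightarrow> distinct e \<longrightarrow>
        real (hashnwalk_cost h alpha t e st)
          \<le> C * (real (length e) + (real (min M (length e)))\<^sup>2))"
proof (intro exI[of _ 13] conjI allI impI)
  fix M :: nat and h :: "'v \<Rightarrow> nat" and alpha t :: real and e :: "'v list" and st :: summary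
  assume "\<forall>v. h v \<in> {1..M}" and "e \<noteq> []"
  define k where "k = length (hnw_supernodes h e)"
  define L where "L = length e"
  have "k \<le> min M L"
    using length_hnw_supernodes_le_min \<open>\<forall>v. h v \<in> {1..M}\<close> by (simp add: k_def L_def)
  then have "real k \<le> real L" and "real k ^ 2 \<le> real (min M L) ^ 2"
    by (simp_all add: power_mono)
  moreover have "1 \<le> real L"
    using \<open>e \<noteq> []\<close> by (simp add: L_def Suc_le_eq)
  ultimately have "4 * real L + 3 * real k + 2 * real k ^ 2 + 6 \<le> 13 * (real L + real (min M L) ^ 2)"
    using zero_le_power2[of "real (min M L)"] unfolding distrib_left by linarith
  then show "real (hashnwalk_cost h alpha t e st) \<le> 13 * (real (length e) + (real (min M (length e)))\<^sup>2)"
    by (simp add: hashnwalk_cost_eq k_def[symmetric] L_def[symmetric] algebra_simps power2_eq_square)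
qed simp

end
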